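(* Every consistent normal modal logic $\Lambda$ is of exactly one of the following types: Type A: $F_\circ\models\Lambda$; Type B: $F_\bullet\models\Lambda$ and $\Lambda\vdash\Box^n\bot$ for some $n\ge 1$; Type C: $F_\bullet\models\Lambda$, $\Lambda\not\vdash\Box^n\bot$ for all $n\ge1$, and $\Lambda\vdash\Diamond^{\le n}\Box\bot$ for some $n\ge 1$.
   Context: A normal modal logic is a set of modal formulas containing all propositional tautologies, the axiom $\Box(\phi\to\psi)\to(\Box\phi\to\Box\psi)$ and $\Diamond\phi\leftrightarrow\neg\Box\neg\phi$, and closed under modus ponens, uniform substitution and necessitation; $\Lambda\vdash\phi$ means $\phi\in\Lambda$; $\Lambda$ is consistent if $\bot\notin\Lambda$. $F_\circ$ is the Kripke frame consisting of a single reflexive world; $F_\bullet$ is the Kripke frame consisting of a single irreflexive world; $F\models\Lambda$ means every formula of $\Lambda$ is valid on $F$. $\Box^0\phi=\phi$, $\Box^{k+1}\phi=\Box\Box^k\phi$, similarly for $\Diamond^k$, and $\Diamond^{\le n}\phi=\bigvee_{k\le n}\Diamond^k\phi$. *)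

theory Defs
  imports Main
begin

datatype fm = Var nat | Bot | Imp fm fm | Box fm | Dia fm

definition Neg :: "fm \<Rightarrow> fm" where "Neg a = Imp a Bot"
definition Or :: "fm \<Rightarrow> fm \<Rightarrow> fm" where "Or a b = Imp (Neg a) b"
definition And :: "fm \<Rightarrow> fm \<Rightarrow> fm" where "And a b = Neg (Imp a (Neg b))"
definition Iff :: "fm \<Rightarrow> fm \<Rightarrow> fm" where "Iff a b = And (Imp a b) (Imp b a)"

text \<open>Propositional evaluation: variables and modal formulas are treated as atoms.\<close>
fun peval :: "(fm \<Rightarrow> bool) \<Rightarrow> fm \<Rightarrow> bool" where
  "peval v (Var p) = v (Var p)"
| "peval v Bot = False"
| "peval v (Imp a b) = (peval v a \<longrightarrow> peval v b)"
| "peval v (Box a) = v (Box a)"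
| "peval v (Dia a) = v (Dia a)"

definition tautology :: "fm \<Rightarrow> bool" where
  "tautology a \<longleftrightarrow> (\<forall>v. peval v a)"

fun subst :: "(nat \<Rightarrow> fm) \<Rightarrow> fm \<Rightarrow> fm" where
  "subst s (Var p) = s p"
| "subst s Bot = Bot"
| "subst s (Imp a b) = Imp (subst s a) (subst s b)"
| "subst s (Box a) = Box (subst s a)"
| "subst s (Dia a) = Dia (subst s a)"

definition normal_logic :: "fm set \<Rightarrow> bool" where
  "normal_logic L \<longleftrightarrow>
     (\<forall>a. tautology a \<longrightarrow> a \<in> L)
   \<and> (\<forall>a b. Imp (Box (Imp a b)) (Imp (Box a) (Box b)) \<in> L)
   \<and> (\<forall>a. Iff (Dia a) (Neg (Box (Neg a))) \<in> L)
   \<and> (\<forall>a b. a \<in> L \<longrightarrow> Imp a b \<in> L \<longrightarrow> b \<in> L)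
   \<and> (\<forall>a s. a \<in> L \<longrightarrow> subst s a \<in> L)
   \<and> (\<forall>a. a \<in> L \<longrightarrow> Box a \<in> L)"

definition consistent :: "fm set \<Rightarrow> bool" where
  "consistent L \<longleftrightarrow> Bot \<notin> L"

fun sat :: "('w \<Rightarrow> 'w \<Rightarrow> bool) \<Rightarrow> ('w \<Rightarrow> nat \<Rightarrow> bool) \<Rightarrow> 'w \<Rightarrow> fm \<Rightarrow> bool" where
  "sat R V w (Var p) = V w p"
| "sat R V w Bot = False"
| "sat R V w (Imp a b) = (sat R V w a \<longrightarrow> sat R V w b)"
| "sat R V w (Box a) = (\<forall>u. R w u \<longrightarrow> sat R V u a)"
| "sat R V w (Dia a) = (\<exists>u. R w u \<and> sat R V u a)"

definition valid_frame :: "('w \<Rightarrow> 'w \<Rightarrow> bool) \<Rightarrow> fm \<Rightarrow> bool" where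
  "valid_frame R a \<longleftrightarrow> (\<forall>V w. sat R V w a)"

definition frame_models :: "('w \<Rightarrow> 'w \<Rightarrow> bool) \<Rightarrow> fm set \<Rightarrow> bool" where
  "frame_models R L \<longleftrightarrow> (\<forall>a\<in>L. valid_frame R a)"

text \<open>F_circ: a single reflexive world; F_bullet: a single irreflexive world.\<close>
definition F_refl :: "unit \<Rightarrow> unit \<Rightarrow> bool" where "F_refl = (\<lambda>_ _. True)"
definition F_irr :: "unit \<Rightarrow> unit \<Rightarrow> bool" where "F_irr = (\<lambda>_ _. False)"

definition boxes :: "nat \<Rightarrow> fm \<Rightarrow> fm" where "boxes n a = (Box ^^ n) a"
definition dias :: "nat \<Rightarrow> fm \<Rightarrow> fm" where "dias n a = (Dia ^^ n) a"

fun dias_le :: "nat \<Rightarrow> fm \<Rightarrow> fm" where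
  "dias_le 0 a = a"
| "dias_le (Suc n) a = Or (dias_le n a) (dias (Suc n) a)"

end

theory Submission
  imports Defs
begin

text \<open>
  Substituting \<open>\<top>\<close> and \<open>\<bottom>\<close> for the variables according to a refuting valuation turns a
  formula of \<open>\<Lambda>\<close> refuted on a one-point frame into a closed formula of \<open>\<Lambda>\<close> that is false
  there. A normal logic decides every closed formula in accordance with its truth value on
  \<open>F\<^sub>\<bullet>\<close> under the hypothesis \<open>\<box>\<bottom>\<close>, and in accordance with its truth value on \<open>F\<^sub>\<circ>\<close>
  under the hypothesis that no dead end is reachable in fewer than \<open>m\<close> steps, \<open>m\<close> being the
  modal depth. Hence if \<open>F\<^sub>\<circ>\<close> refutes \<open>\<Lambda>\<close>, then \<open>\<Lambda>\<close> proves that a dead end is reachable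
  in fewer than \<open>m\<close> steps, i.e. \<open>\<Diamond>\<^sup>\<le>\<^sup>n\<box>\<bottom>\<close> for \<open>n = m - 1\<close> (and \<open>m \<ge> 1\<close> by
  consistency); if \<open>F\<^sub>\<bullet>\<close> refuted \<open>\<Lambda>\<close> as well, \<open>\<Lambda>\<close> would prove \<open>\<not>\<box>\<bottom>\<close> and hence the
  negation of that formula. Conversely, \<open>\<box>\<^sup>n\<bottom>\<close> and \<open>\<Diamond>\<^sup>\<le>\<^sup>n\<box>\<bottom>\<close> are false on \<open>F\<^sub>\<circ>\<close>.
\<close>

lemmas taut_simps = tautology_def Neg_def Or_def And_def Iff_def

fun closed :: "fm \<Rightarrow> bool" where
  "closed (Var p) = False"
| "closed Bot = True"
| "closed (Imp a b) = (closed a \<and> closed b)"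
| "closed (Box a) = closed a"
| "closed (Dia a) = closed a"

fun depth :: "fm \<Rightarrow> nat" where
  "depth (Var p) = 0"
| "depth Bot = 0"
| "depth (Imp a b) = max (depth a) (depth b)"
| "depth (Box a) = Suc (depth a)"
| "depth (Dia a) = Suc (depth a)"

fun signed :: "bool \<Rightarrow> fm \<Rightarrow> fm" where
  "signed True a = a"
| "signed False a = Neg a"

text \<open>\<open>reach_dead_end m\<close> holds at a world from which a world without successors is reachable
  in fewer than \<open>m\<close> steps; it is provably equivalent to \<open>dias_le (m - 1) (Box Bot)\<close> for
  \<open>m \<ge> 1\<close>, but its recursion follows that of \<open>Box\<close>.\<close>
fun reach_dead_end :: "nat \<Rightarrow> fm" where
  "reach_dead_end 0 = Bot"
| "reach_dead_end (Suc m) = Or (Box Bot) (Dia (reach_dead_end m))"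

lemma sat_subst: "sat R V w (subst s a) = sat R (\<lambda>u p. sat R V u (s p)) w a"
  by (induction a arbitrary: w) auto

definition truth_subst :: "(unit \<Rightarrow> nat \<Rightarrow> bool) \<Rightarrow> nat \<Rightarrow> fm" where
  "truth_subst V p = (if V () p then Neg Bot else Bot)"

lemma closed_subst_truth_subst: "closed (subst (truth_subst V) a)"
  by (induction a) (auto simp: truth_subst_def Neg_def)

lemma sat_subst_truth_subst:
  fixes R :: "unit \<Rightarrow> unit \<Rightarrow> bool"
  shows "sat R W () (subst (truth_subst V) a) = sat R V () a"
proof -
  have "(\<lambda>u p. sat R W u (truth_subst V p)) = V"
    by (auto simp: truth_subst_def Neg_def)
  then show ?thesis by (simp add: sat_subst)
qed

lemma sat_if_frame_models: "frame_models R L \<Longrightarrow> a \<in> L \<Longrightarrow> sat R V w a"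
  by (simp add: frame_models_def valid_frame_def)

lemma not_sat_refl_boxes: "\<not> sat F_refl V () (boxes n Bot)"
  by (induction n) (auto simp: boxes_def F_refl_def)

lemma not_sat_refl_dias_le: "\<not> sat F_refl V () (dias_le n (Box Bot))"
proof -
  have "\<not> sat F_refl V () (dias k (Box Bot))" for k
    by (induction k) (auto simp: dias_def F_refl_def)
  then show ?thesis
    by (induction n) (auto simp: Or_def Neg_def F_refl_def)
qed

context
  fixes L :: "fm set"
  assumes L: "normal_logic L"
begin

lemma taut_in: "tautology a \<Longrightarrow> a \<in> L"
  using L unfolding normal_logic_def by blast

lemma mp_in: "a \<in> L \<Longrightarrow> Imp a b \<in> L \<Longrightarrow> b \<in> L"
  using L unfolding normal_logic_def by blast

lemma K_in: "Imp (Box (Imp a b)) (Imp (Box a) (Box b)) \<in> L"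
  using L unfolding normal_logic_def by blast

lemma dual_in: "Iff (Dia a) (Neg (Box (Neg a))) \<in> L"
  using L unfolding normal_logic_def by blast

lemma subst_in: "a \<in> L \<Longrightarrow> subst s a \<in> L"
  using L unfolding normal_logic_def by blast

lemma nec_in: "a \<in> L \<Longrightarrow> Box a \<in> L"
  using L unfolding normal_logic_def by blast

lemma taut_consequence1: "a \<in> L \<Longrightarrow> tautology (Imp a c) \<Longrightarrow> c \<in> L"
  using mp_in taut_in by blast

lemma taut_consequence2: "a \<in> L \<Longrightarrow> b \<in> L \<Longrightarrow> tautology (Imp a (Imp b c)) \<Longrightarrow> c \<in> L"
  using mp_in taut_in by blast

lemma taut_consequence3:
  "a \<in> L \<Longrightarrow> b \<in> L \<Longrightarrow> c \<in> L \<Longrightarrow> tautology (Imp a (Imp b (Imp c d))) \<Longrightarrow> d \<in> L"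
  using mp_in taut_in by blast

lemma box_mono: "Imp a b \<in> L \<Longrightarrow> Imp (Box a) (Box b) \<in> L"
  using mp_in[OF nec_in K_in] .

lemma box_mono2: "Imp a (Imp b c) \<in> L \<Longrightarrow> Imp (Box a) (Imp (Box b) (Box c)) \<in> L"
  using box_mono K_in by (rule taut_consequence2) (auto simp: taut_simps)

lemma box_mono_taut: "tautology (Imp a b) \<Longrightarrow> Imp (Box a) (Box b) \<in> L"
  by (intro box_mono taut_in)

lemma dia_mono: "Imp a b \<in> L \<Longrightarrow> Imp (Dia a) (Dia b) \<in> L"
proof -
  assume "Imp a b \<in> L"
  then have "Imp (Neg b) (Neg a) \<in> L"
    by (rule taut_consequence1) (auto simp: taut_simps)
  then have "Imp (Box (Neg b)) (Box (Neg a)) \<in> L" by (rule box_mono)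
  with dual_in[of a] dual_in[of b] show ?thesis
    by (rule taut_consequence3) (auto simp: taut_simps)
qed

lemma dia_or: "Imp (Dia (Or a b)) (Or (Dia a) (Dia b)) \<in> L"
proof -
  have "Imp (Box (Neg a)) (Imp (Box (Neg b)) (Box (Neg (Or a b)))) \<in> L"
    by (intro box_mono2 taut_in) (auto simp: taut_simps)
  with dual_in[of a] dual_in[of b]
  have "Imp (Neg (Dia a)) (Imp (Neg (Dia b)) (Box (Neg (Or a b)))) \<in> L"
    by (rule taut_consequence3) (auto simp: taut_simps)
  with dual_in[of "Or a b"] show ?thesis
    by (rule taut_consequence2) (auto simp: taut_simps)
qed

lemma reach_dead_end_Suc_Box:
  assumes "Or (reach_dead_end m) (signed s b) \<in> L"
  shows "Or (reach_dead_end (Suc m)) (signed s (Box b)) \<in> L"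
proof (cases s)
  case True
  with assms have "Imp (Box (Neg (reach_dead_end m))) (Box b) \<in> L"
    by (simp add: box_mono Or_def)
  with dual_in[of "reach_dead_end m"] have "Or (reach_dead_end (Suc m)) (Box b) \<in> L"
    by (rule taut_consequence2) (auto simp: taut_simps)
  with True show ?thesis by simp
next
  case False
  \<comment> \<open>\<open>\<box>\<not>E \<and> \<box>b \<longrightarrow> \<box>\<bottom>\<close>: this is why \<open>reach_dead_end\<close> has the disjunct \<open>\<box>\<bottom>\<close>.\<close>
  with assms have "Imp (Box (Neg (reach_dead_end m))) (Imp (Box b) (Box Bot)) \<in> L"
    by (simp add: box_mono2 Or_def Neg_def)
  with dual_in[of "reach_dead_end m"]
  have "Or (reach_dead_end (Suc m)) (Neg (Box b)) \<in> L"
    by (rule taut_consequence2) (auto simp: taut_simps)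
  with False show ?thesis by simp
qed

lemma reach_dead_end_Suc_Dia:
  assumes "Or (reach_dead_end m) (signed s b) \<in> L"
  shows "Or (reach_dead_end (Suc m)) (signed s (Dia b)) \<in> L"
proof -
  have "Or (reach_dead_end m) (signed (\<not> s) (Neg b)) \<in> L"
    using assms by (rule taut_consequence1) (cases s; auto simp: taut_simps)
  then have "Or (reach_dead_end (Suc m)) (signed (\<not> s) (Box (Neg b))) \<in> L"
    by (rule reach_dead_end_Suc_Box)
  with dual_in[of b] show ?thesis
    by (rule taut_consequence2) (cases s; auto simp: taut_simps)
qed

lemma closed_decided_refl:
  "closed x \<Longrightarrow> depth x \<le> m \<Longrightarrow> Or (reach_dead_end m) (signed (sat F_refl V () x) x) \<in> L"
proof (induction x arbitrary: m)
  case (Imp a b)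
  then have "Or (reach_dead_end m) (signed (sat F_refl V () a) a) \<in> L"
    and "Or (reach_dead_end m) (signed (sat F_refl V () b) b) \<in> L" by auto
  then show ?case
    by (rule taut_consequence2)
      (cases "sat F_refl V () a"; cases "sat F_refl V () b"; auto simp: taut_simps)
next
  case (Box a)
  then obtain k where "m = Suc k" "depth a \<le> k" by (cases m) auto
  with Box reach_dead_end_Suc_Box show ?case by (auto simp: F_refl_def)
next
  case (Dia a)
  then obtain k where "m = Suc k" "depth a \<le> k" by (cases m) auto
  with Dia reach_dead_end_Suc_Dia show ?case by (auto simp: F_refl_def)
qed (auto intro: taut_in simp: taut_simps)

lemma closed_decided_irr:
  "closed x \<Longrightarrow> Imp (Box Bot) (signed (sat F_irr V () x) x) \<in> L"
proof (induction x)
  case (Imp a b)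
  then have "Imp (Box Bot) (signed (sat F_irr V () a) a) \<in> L"
    and "Imp (Box Bot) (signed (sat F_irr V () b) b) \<in> L" by auto
  then show ?case
    by (rule taut_consequence2)
      (cases "sat F_irr V () a"; cases "sat F_irr V () b"; auto simp: taut_simps)
next
  case (Box a)
  show ?case by (simp add: F_irr_def box_mono_taut taut_simps)
next
  case (Dia a)
  have "Imp (Box Bot) (Box (Neg a)) \<in> L" by (rule box_mono_taut) (simp add: taut_simps)
  with dual_in[of a] show ?case
    by (rule taut_consequence2) (auto simp: taut_simps F_irr_def)
qed (auto intro: taut_in simp: taut_simps)

lemma closed_instance_if_not_frame_models:
  fixes R :: "unit \<Rightarrow> unit \<Rightarrow> bool"
  assumes "\<not> frame_models R L"
  obtains x V where "x \<in> L" "closed x" "\<not> sat R V () x"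
proof -
  from assms obtain a V where "a \<in> L" "\<not> sat R V () a"
    by (auto simp: frame_models_def valid_frame_def)
  then show ?thesis
    using that[of "subst (truth_subst V) a" V]
    by (simp add: subst_in closed_subst_truth_subst sat_subst_truth_subst)
qed

lemma reach_dead_end_if_not_refl_model:
  assumes "\<not> frame_models F_refl L"
  obtains m where "reach_dead_end m \<in> L"
proof -
  obtain x V where x: "x \<in> L" "closed x" "\<not> sat F_refl V () x"
    using closed_instance_if_not_frame_models[OF assms] .
  with closed_decided_refl[OF x(2) le_refl, of V]
  have "Or (reach_dead_end (depth x)) (Neg x) \<in> L" by simp
  with x(1) have "reach_dead_end (depth x) \<in> L"
    by (rule taut_consequence2) (auto simp: taut_simps)
  then show ?thesis by (rule that)
qed

lemma not_Box_Bot_if_not_irr_model: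
  assumes "\<not> frame_models F_irr L"
  shows "Neg (Box Bot) \<in> L"
proof -
  obtain x V where x: "x \<in> L" "closed x" "\<not> sat F_irr V () x"
    using closed_instance_if_not_frame_models[OF assms] .
  with closed_decided_irr[OF x(2), of V] have "Imp (Box Bot) (Neg x) \<in> L" by simp
  with x(1) show ?thesis
    by (rule taut_consequence2) (auto simp: taut_simps)
qed

lemma not_reach_dead_end: "Neg (Box Bot) \<in> L \<Longrightarrow> Neg (reach_dead_end m) \<in> L"
proof (induction m)
  case 0
  show ?case by (simp add: taut_in taut_simps)
next
  case (Suc m)
  with nec_in have "Box (Neg (reach_dead_end m)) \<in> L" by blast
  with dual_in[of "reach_dead_end m"] Suc.prems show ?case
    by (simp, rule taut_consequence3) (auto simp: taut_simps)
qed

lemma tautology_imp_dias_le: "tautology (Imp a (dias_le n a))"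
  by (induction n) (auto simp: taut_simps)

lemma dia_dias_le: "Imp (Dia (dias_le n a)) (dias_le (Suc n) a) \<in> L"
proof (induction n)
  case 0
  show ?case by (simp add: taut_in taut_simps dias_def)
next
  case (Suc n)
  with dia_or[of "dias_le n a" "dias (Suc n) a"] show ?case
    by (simp, rule taut_consequence2) (auto simp: taut_simps dias_def)
qed

lemma reach_dead_end_imp_dias_le: "Imp (reach_dead_end (Suc n)) (dias_le n (Box Bot)) \<in> L"
proof (induction n)
  case 0
  have "Box (Neg Bot) \<in> L" by (simp add: nec_in taut_in taut_simps)
  with dual_in[of Bot] show ?case
    by (simp, rule taut_consequence2) (auto simp: taut_simps)
next
  case (Suc n)
  then have "Imp (Dia (reach_dead_end (Suc n))) (Dia (dias_le n (Box Bot))) \<in> L"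
    by (rule dia_mono)
  with taut_in[OF tautology_imp_dias_le] dia_dias_le[of n "Box Bot"] show ?case
    by (simp, rule taut_consequence3) (auto simp: taut_simps)
qed

lemma irr_model_if_not_refl_model:
  assumes "consistent L" and "\<not> frame_models F_refl L"
  shows "frame_models F_irr L"
proof (rule ccontr)
  assume "\<not> frame_models F_irr L"
  then have "Neg (reach_dead_end m) \<in> L" for m
    by (intro not_reach_dead_end not_Box_Bot_if_not_irr_model)
  moreover obtain m where "reach_dead_end m \<in> L"
    using reach_dead_end_if_not_refl_model[OF assms(2)] .
  ultimately have "Bot \<in> L" unfolding Neg_def by (blast intro: mp_in)
  with assms(1) show False by (simp add: consistent_def)
qed

lemma dias_le_if_not_refl_model:
  assumes "consistent L" and "\<not> frame_models F_refl L"
  shows "\<exists>n\<ge>1. dias_le n (Box Bot) \<in> L"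
proof -
  obtain m where m: "reach_dead_end m \<in> L"
    using reach_dead_end_if_not_refl_model[OF assms(2)] .
  with assms(1) obtain n where n: "m = Suc n"
    by (cases m) (auto simp: consistent_def)
  from m have "dias_le n (Box Bot) \<in> L"
    unfolding n by (rule mp_in[OF _ reach_dead_end_imp_dias_le])
  then have "dias_le (Suc n) (Box Bot) \<in> L"
    by (rule taut_consequence1) (auto simp: taut_simps)
  then show ?thesis by (intro exI[of _ "Suc n"]) simp
qed

end

theorem theorem4p13:
  fixes L :: "fm set"
  assumes "normal_logic L" and "consistent L"
  defines "TA \<equiv> frame_models F_refl L"
      and "TB \<equiv> frame_models F_irr L \<and> (\<exists>n\<ge>1. boxes n Bot \<in> L)"
      and "TC \<equiv> frame_models F_irr L \<and> (\<forall>n\<ge>1. boxes n Bot \<notin> L)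
                 \<and> (\<exists>n\<ge>1. dias_le n (Box Bot) \<in> L)"
  shows "(TA \<and> \<not> TB \<and> \<not> TC) \<or> (\<not> TA \<and> TB \<and> \<not> TC) \<or> (\<not> TA \<and> \<not> TB \<and> TC)"
proof -
  have "\<not> TB \<and> \<not> TC" if TA
  proof -
    have "boxes n Bot \<notin> L" "dias_le n (Box Bot) \<notin> L" for n
      using \<open>TA\<close> sat_if_frame_models not_sat_refl_boxes not_sat_refl_dias_le
      unfolding TA_def by metis+
    then show ?thesis unfolding TB_def TC_def by simp
  qed
  moreover have "TB \<or> TC" if "\<not> TA"
  proof -
    have "frame_models F_irr L" "\<exists>n\<ge>1. dias_le n (Box Bot) \<in> L"
      using that irr_model_if_not_refl_model[OF assms(1,2)] dias_le_if_not_refl_model[OF assms(1,2)]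
      unfolding TA_def by simp_all
    then show ?thesis unfolding TB_def TC_def by auto
  qed
  moreover have "\<not> (TB \<and> TC)"
    unfolding TB_def TC_def by blast
  ultimately show ?thesis by argo
qed

end
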